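(* Let $z_0\in\mathbb{B}^2$, $t>0$ and $r=e^t$. Then the Hilbert circle $\partial B_h(z_0,t)=\{z\in\mathbb{B}^2: h_{\mathbb{B}^2}(z_0,z)=t\}$ is exactly the set of $z\in\mathbb{C}$ satisfying $$\overline{z_0}^2rz^2-\big((r^2+1)|z_0|^2-(r+1)^2\big)z\overline{z}+z_0^2r\overline{z}^2-4\overline{z_0}rz-4z_0r\overline{z}+(r+1)^2|z_0|^2-(r-1)^2=0,$$ and this set is a Euclidean ellipse contained in $\mathbb{B}^2$.
   Context: $\mathbb{B}^2$ is the open unit disk in $\mathbb{C}$. For distinct $x,y\in\mathbb{B}^2$ the Hilbert metric is $h_{\mathbb{B}^2}(x,y)=\log\frac{|u-y||x-v|}{|u-x||y-v|}$, where $u,v$ are the intersection points of the line through $x,y$ with the unit circle, labelled so that $|u-x|<|u-y|$; also $h_{\mathbb{B}^2}(x,x)=0$. $B_h(z_0,t)=\{z\in\mathbb{B}^2:h_{\mathbb{B}^2}(z_0,z)<t\}$. *)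

theory Defs
  imports "HOL-Analysis.Analysis"
begin

definition hilbert_endpoints :: "complex \<Rightarrow> complex \<Rightarrow> complex \<times> complex" where
  "hilbert_endpoints x y = (SOME (u, v).
      cmod u = 1 \<and> cmod v = 1 \<and> u \<noteq> v \<and>
      (\<exists>s::real. u = x + of_real s * (y - x)) \<and>
      (\<exists>s::real. v = x + of_real s * (y - x)) \<and>
      cmod (u - x) < cmod (u - y))"

definition hilbert_disk :: "complex \<Rightarrow> complex \<Rightarrow> real" where
  "hilbert_disk x y = (if x = y then 0 else
     (let (u, v) = hilbert_endpoints x y in
        ln ((cmod (u - y) * cmod (x - v)) / (cmod (u - x) * cmod (y - v)))))"

text \<open>Euclidean ellipse in the plane (circles allowed, as the case of coinciding foci).\<close>
definition is_ellipse :: "complex set \<Rightarrow> bool" where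
  "is_ellipse E \<longleftrightarrow> (\<exists>f1 f2 (a::real). dist f1 f2 < 2 * a \<and>
      E = {z. dist z f1 + dist z f2 = 2 * a})"

end

(*
  Parametrise the chord through z0 and z as s \<mapsto> z0 + s (z - z0). Its endpoints on the unit
  circle are the roots su < 0 < 1 < sv of a s\<^sup>2 + 2 b s + c = 0 with a = |z - z0|\<^sup>2,
  b = Re (cnj z0 (z - z0)) and c = |z0|\<^sup>2 - 1, and the Hilbert distance is the logarithm of the
  cross ratio (1 - su) sv / ((- su) (sv - 1)). Setting this cross ratio equal to r and eliminating
  su, sv by Vieta's formulas gives (1 + r)\<^sup>2 (b\<^sup>2 - a c) = (r - 1)\<^sup>2 (b + c)\<^sup>2, which is the real
  form 4 r (Re (cnj z0 z) - 1)\<^sup>2 = (1 + r)\<^sup>2 (1 - |z0|\<^sup>2) (1 - |z|\<^sup>2) of the quadric. This real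
  form has no zeros with |z| \<ge> 1 and is a negative multiple of the quartic equation of an
  ellipse with explicit foci.
*)
theory Submission
  imports Defs "HOL-Library.Quadratic_Discriminant"
begin

lemma quadratic_roots_sum_prod:
  fixes a b c s1 s2 :: real
  assumes s1: "a * s1\<^sup>2 + 2 * b * s1 + c = 0" and s2: "a * s2\<^sup>2 + 2 * b * s2 + c = 0"
    and "s1 \<noteq> s2"
  shows "a * (s1 + s2) = - 2 * b" and "a * s1 * s2 = c"
proof -
  have "(s1 - s2) * (a * (s1 + s2) + 2 * b) = 0"
    using s1 s2 by (simp add: power2_eq_square algebra_simps)
  then show sum: "a * (s1 + s2) = - 2 * b"
    using \<open>s1 \<noteq> s2\<close> by simp
  have "a * s1 * s2 - c = s1 * (a * (s1 + s2) + 2 * b) - (a * s1\<^sup>2 + 2 * b * s1 + c)"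
    by (simp add: power2_eq_square algebra_simps)
  then show "a * s1 * s2 = c"
    using sum s1 by simp
qed

lemma quadratic_has_roots_of_opposite_signs:
  fixes a b c :: real
  assumes "a > 0" and "c < 0"
  obtains s1 s2 where "s1 < 0" "0 < s2"
    "a * s1\<^sup>2 + 2 * b * s1 + c = 0" "a * s2\<^sup>2 + 2 * b * s2 + c = 0"
proof -
  have "a * c < 0"
    using assms by (simp add: mult_pos_neg)
  then have "discrim a (2 * b) c > 0"
    unfolding discrim_def by (simp add: power_mult_distrib)
      (meson le_less_trans not_less zero_le_power2)
  then obtain x y where "x \<noteq> y" and
    roots: "a * x\<^sup>2 + 2 * b * x + c = 0" "a * y\<^sup>2 + 2 * b * y + c = 0"
    using discriminant_pos_ex[of a "2 * b" c] assms by auto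
  then have "a * (x * y) < 0"
    using quadratic_roots_sum_prod(2)[OF roots] assms by (simp add: mult.assoc)
  then have "x * y < 0"
    using assms by (simp add: mult_less_0_iff)
  then consider "x < 0" "0 < y" | "y < 0" "0 < x"
    by (auto simp: mult_less_0_iff)
  then show ?thesis
    using that roots by cases blast+
qed

lemma cross_ratio_eq_iff:
  fixes a b c su sv r :: real
  assumes "a > 0" and su: "a * su\<^sup>2 + 2 * b * su + c = 0" and sv: "a * sv\<^sup>2 + 2 * b * sv + c = 0"
    and "su < 0" and "sv > 1" and "r > 1"
  shows "(1 - su) * sv / ((- su) * (sv - 1)) = r \<longleftrightarrow>
    (1 + r)\<^sup>2 * (b\<^sup>2 - a * c) = (r - 1)\<^sup>2 * (b + c)\<^sup>2"
proof -
  have sum: "a * (su + sv) = - 2 * b" and prod: "a * su * sv = c"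
    using quadratic_roots_sum_prod[OF su sv] assms by auto
  \<comment> \<open>\<open>X = Y\<close> is the cross-ratio equation cleared of denominators; after squaring both
    sides are symmetric in \<open>su\<close>, \<open>sv\<close>, so Vieta's formulas eliminate the roots.\<close>
  define X where "X = (1 + r) * (sv - su)"
  define Y where "Y = (r - 1) * (su * (1 - sv) + sv * (1 - su))"
  have "X > 0"
    using assms unfolding X_def by simp
  moreover have "Y > 0"
    using assms unfolding Y_def by (simp add: mult_neg_neg add_pos_pos)
  ultimately have XY: "X = Y \<longleftrightarrow> a\<^sup>2 * X\<^sup>2 = a\<^sup>2 * Y\<^sup>2"
    using \<open>a > 0\<close> by simp
  have "a\<^sup>2 * X\<^sup>2 = (1 + r)\<^sup>2 * ((a * (su + sv))\<^sup>2 - 4 * a * (a * su * sv))"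
    unfolding X_def by (simp add: power2_eq_square algebra_simps)
  also have "\<dots> = 4 * ((1 + r)\<^sup>2 * (b\<^sup>2 - a * c))"
    unfolding sum prod by (simp add: power2_eq_square algebra_simps)
  finally have X2: "a\<^sup>2 * X\<^sup>2 = 4 * ((1 + r)\<^sup>2 * (b\<^sup>2 - a * c))" .
  have "a\<^sup>2 * Y\<^sup>2 = (r - 1)\<^sup>2 * (a * (su + sv) - 2 * (a * su * sv))\<^sup>2"
    unfolding Y_def by (simp add: power2_eq_square algebra_simps)
  also have "\<dots> = 4 * ((r - 1)\<^sup>2 * (b + c)\<^sup>2)"
    unfolding sum prod by (simp add: power2_eq_square algebra_simps)
  finally have Y2: "a\<^sup>2 * Y\<^sup>2 = 4 * ((r - 1)\<^sup>2 * (b + c)\<^sup>2)" .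
  have "(1 - su) * sv / ((- su) * (sv - 1)) = r \<longleftrightarrow> (1 - su) * sv = r * ((- su) * (sv - 1))"
  proof -
    have "(- su) * (sv - 1) \<noteq> 0"
      using assms by simp
    then show ?thesis
      using nonzero_divide_eq_eq[of "(- su) * (sv - 1)" "(1 - su) * sv" r] by (simp add: mult.commute)
  qed
  also have "\<dots> \<longleftrightarrow> X = Y"
    unfolding X_def Y_def by (auto simp: algebra_simps)
  finally show ?thesis
    unfolding XY X2 Y2 by simp
qed

definition chord_endpoints :: "complex \<Rightarrow> complex \<Rightarrow> complex \<times> complex \<Rightarrow> bool" where
  "chord_endpoints x y = (\<lambda>(u, v). cmod u = 1 \<and> cmod v = 1 \<and> u \<noteq> v \<and>
      (\<exists>s::real. u = x + of_real s * (y - x)) \<and>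
      (\<exists>s::real. v = x + of_real s * (y - x)) \<and>
      cmod (u - x) < cmod (u - y))"

lemma hilbert_endpoints_eq_Eps: "hilbert_endpoints x y = (SOME p. chord_endpoints x y p)"
  unfolding hilbert_endpoints_def chord_endpoints_def ..

lemma norm_line_point_sq:
  "(cmod (x + of_real s * d))\<^sup>2 = (cmod d)\<^sup>2 * s\<^sup>2 + 2 * Re (cnj x * d) * s + (cmod x)\<^sup>2"
  unfolding cmod_power2 by (simp add: power2_eq_square algebra_simps)

lemma norm_line_point_eq_1_iff:
  "cmod (x + of_real s * d) = 1 \<longleftrightarrow>
    (cmod d)\<^sup>2 * s\<^sup>2 + 2 * Re (cnj x * d) * s + ((cmod x)\<^sup>2 - 1) = 0"
proof -
  have "cmod (x + of_real s * d) = 1 \<longleftrightarrow> (cmod (x + of_real s * d))\<^sup>2 = 1"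
    using power2_eq_iff_nonneg[of "cmod (x + of_real s * d)" 1] by simp
  also have "\<dots> \<longleftrightarrow> (cmod d)\<^sup>2 * s\<^sup>2 + 2 * Re (cnj x * d) * s + ((cmod x)\<^sup>2 - 1) = 0"
    unfolding norm_line_point_sq by (simp only: add_diff_eq eq_iff_diff_eq_0[of _ 1])
  finally show ?thesis .
qed

lemma norm_chord_point_diff_start: "cmod (x + of_real s * (y - x) - x) = \<bar>s\<bar> * cmod (y - x)"
  by (simp add: norm_mult)

lemma norm_chord_point_diff_end: "cmod (x + of_real s * (y - x) - y) = \<bar>s - 1\<bar> * cmod (y - x)"
proof -
  have "x + of_real s * (y - x) - y = of_real (s - 1) * (y - x)"
    by (simp add: algebra_simps)
  then show ?thesis
    by (simp only: norm_mult norm_of_real)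
qed

lemma chord_point_in_disk:
  assumes "cmod x < 1" "cmod y < 1" "0 \<le> s" "s \<le> 1"
  shows "cmod (x + of_real s * (y - x)) < 1"
proof -
  have "(1 - s) *\<^sub>R x + s *\<^sub>R y \<in> ball 0 1"
    using assms by (intro convexD[OF convex_ball]) auto
  moreover have "x + of_real s * (y - x) = (1 - s) *\<^sub>R x + s *\<^sub>R y"
    by (simp add: scaleR_conv_of_real algebra_simps)
  ultimately show ?thesis
    by simp
qed

lemma chord_endpoints_hilbert_endpoints:
  assumes "cmod x < 1" and "x \<noteq> y"
  shows "chord_endpoints x y (hilbert_endpoints x y)"
proof -
  define d where "d = y - x"
  have "d \<noteq> 0"
    using assms by (simp add: d_def)
  moreover have "(cmod x)\<^sup>2 - 1 < 0"
    using assms by (simp add: power_less_one_iff)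
  ultimately obtain s1 s2 where "s1 < 0" "0 < s2" and
    roots: "(cmod d)\<^sup>2 * s1\<^sup>2 + 2 * Re (cnj x * d) * s1 + ((cmod x)\<^sup>2 - 1) = 0"
           "(cmod d)\<^sup>2 * s2\<^sup>2 + 2 * Re (cnj x * d) * s2 + ((cmod x)\<^sup>2 - 1) = 0"
    using quadratic_has_roots_of_opposite_signs by (metis zero_less_norm_iff zero_less_power)
  have "cmod (x + of_real s1 * d) = 1" "cmod (x + of_real s2 * d) = 1"
    using roots by (simp_all only: norm_line_point_eq_1_iff)
  moreover have "x + of_real s1 * d \<noteq> x + of_real s2 * d"
    using \<open>d \<noteq> 0\<close> \<open>s1 < 0\<close> \<open>0 < s2\<close> by simp
  moreover have "cmod (x + of_real s1 * d - x) < cmod (x + of_real s1 * d - y)"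
    using \<open>d \<noteq> 0\<close> \<open>s1 < 0\<close>
    unfolding d_def norm_chord_point_diff_start norm_chord_point_diff_end
    by (simp add: algebra_simps)
  ultimately have "chord_endpoints x y (x + of_real s1 * d, x + of_real s2 * d)"
    unfolding chord_endpoints_def d_def by blast
  then show ?thesis
    unfolding hilbert_endpoints_eq_Eps by (rule someI)
qed

lemma chord_endpoints_params:
  assumes x: "cmod x < 1" and y: "cmod y < 1" and "x \<noteq> y"
    and "chord_endpoints x y (u, v)"
  obtains su sv where "su < 0" "sv > 1"
    "u = x + of_real su * (y - x)" "v = x + of_real sv * (y - x)"
    "(cmod (y - x))\<^sup>2 * su\<^sup>2 + 2 * Re (cnj x * (y - x)) * su + ((cmod x)\<^sup>2 - 1) = 0"
    "(cmod (y - x))\<^sup>2 * sv\<^sup>2 + 2 * Re (cnj x * (y - x)) * sv + ((cmod x)\<^sup>2 - 1) = 0"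
proof -
  let ?q = "\<lambda>s. (cmod (y - x))\<^sup>2 * s\<^sup>2 + 2 * Re (cnj x * (y - x)) * s + ((cmod x)\<^sup>2 - 1)"
  obtain su sv where u: "u = x + of_real su * (y - x)" and v: "v = x + of_real sv * (y - x)"
    and "cmod u = 1" "cmod v = 1" "u \<noteq> v" and label: "cmod (u - x) < cmod (u - y)"
    using \<open>chord_endpoints x y (u, v)\<close> unfolding chord_endpoints_def by auto
  note on_circle = norm_line_point_eq_1_iff[of x _ "y - x"]
  have roots: "?q su = 0" "?q sv = 0"
    using on_circle u v \<open>cmod u = 1\<close> \<open>cmod v = 1\<close> by auto
  have outside_chord: "s < 0 \<or> 1 < s" if "?q s = 0" for s
    using chord_point_in_disk[OF x y, of s] on_circle[of s] that by fastforce
  have "(cmod (y - x))\<^sup>2 * su * sv = (cmod x)\<^sup>2 - 1"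
    using quadratic_roots_sum_prod(2)[OF roots] \<open>u \<noteq> v\<close> u v by auto
  moreover have "(cmod x)\<^sup>2 - 1 < 0"
    using x by (simp add: power_less_one_iff)
  ultimately have "su * sv < 0"
    by (metis mult.assoc mult_less_0_iff zero_le_power2 not_less)
  have "\<bar>su\<bar> < \<bar>su - 1\<bar>"
    using label \<open>x \<noteq> y\<close> unfolding u norm_chord_point_diff_start norm_chord_point_diff_end by simp
  then have "su < 0"
    using outside_chord[OF roots(1)] by linarith
  with \<open>su * sv < 0\<close> have "sv > 1"
    using outside_chord[OF roots(2)] by (auto simp: mult_less_0_iff)
  with \<open>su < 0\<close> show ?thesis
    using that u v roots by blast
qed

lemma hilbert_disk_eq_ln_cross_ratio:
  assumes x: "cmod x < 1" and y: "cmod y < 1" and "x \<noteq> y"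
  obtains su sv where "su < 0" "sv > 1"
    "(cmod (y - x))\<^sup>2 * su\<^sup>2 + 2 * Re (cnj x * (y - x)) * su + ((cmod x)\<^sup>2 - 1) = 0"
    "(cmod (y - x))\<^sup>2 * sv\<^sup>2 + 2 * Re (cnj x * (y - x)) * sv + ((cmod x)\<^sup>2 - 1) = 0"
    "hilbert_disk x y = ln ((1 - su) * sv / ((- su) * (sv - 1)))"
proof -
  obtain u v where uv: "hilbert_endpoints x y = (u, v)"
    by fastforce
  then have "chord_endpoints x y (u, v)"
    using chord_endpoints_hilbert_endpoints[OF x \<open>x \<noteq> y\<close>] by simp
  then obtain su sv where "su < 0" "sv > 1" and u: "u = x + of_real su * (y - x)"
    and v: "v = x + of_real sv * (y - x)" and roots:
    "(cmod (y - x))\<^sup>2 * su\<^sup>2 + 2 * Re (cnj x * (y - x)) * su + ((cmod x)\<^sup>2 - 1) = 0"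
    "(cmod (y - x))\<^sup>2 * sv\<^sup>2 + 2 * Re (cnj x * (y - x)) * sv + ((cmod x)\<^sup>2 - 1) = 0"
    by (rule chord_endpoints_params[OF x y \<open>x \<noteq> y\<close>])
  define l where "l = cmod (y - x)"
  have "l > 0"
    using \<open>x \<noteq> y\<close> by (simp add: l_def)
  have "cmod (u - y) = (1 - su) * l" "cmod (u - x) = (- su) * l"
    using \<open>su < 0\<close> unfolding u l_def norm_chord_point_diff_start norm_chord_point_diff_end
    by simp_all
  moreover have "cmod (x - v) = sv * l" "cmod (y - v) = (sv - 1) * l"
    using \<open>sv > 1\<close> norm_minus_commute[of x v] norm_minus_commute[of y v]
    unfolding v l_def norm_chord_point_diff_start norm_chord_point_diff_end
    by simp_all
  ultimately have "cmod (u - y) * cmod (x - v) / (cmod (u - x) * cmod (y - v))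
      = ((1 - su) * sv) * (l * l) / (((- su) * (sv - 1)) * (l * l))"
    by (simp only: ac_simps)
  also have "\<dots> = (1 - su) * sv / ((- su) * (sv - 1))"
    using \<open>l > 0\<close> by (intro mult_divide_mult_cancel_right) simp
  finally have "hilbert_disk x y = ln ((1 - su) * sv / ((- su) * (sv - 1)))"
    unfolding hilbert_disk_def using \<open>x \<noteq> y\<close> uv by simp
  then show ?thesis
    using that \<open>su < 0\<close> \<open>sv > 1\<close> roots by blast
qed

definition hilbert_circle_form :: "complex \<Rightarrow> real \<Rightarrow> complex \<Rightarrow> real" where
  "hilbert_circle_form z0 r z =
     4 * r * (Re (cnj z0 * z) - 1)\<^sup>2 - (1 + r)\<^sup>2 * (1 - (cmod z0)\<^sup>2) * (1 - (cmod z)\<^sup>2)"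

lemma quadric_eq_of_real_hilbert_circle_form:
  "(cnj z0)\<^sup>2 * of_real r * z\<^sup>2
     - of_real ((r\<^sup>2 + 1) * (cmod z0)\<^sup>2 - (r + 1)\<^sup>2) * z * cnj z
     + z0\<^sup>2 * of_real r * (cnj z)\<^sup>2
     - 4 * cnj z0 * of_real r * z - 4 * z0 * of_real r * cnj z
     + of_real ((r + 1)\<^sup>2 * (cmod z0)\<^sup>2 - (r - 1)\<^sup>2) = of_real (hilbert_circle_form z0 r z)"
  unfolding hilbert_circle_form_def cmod_power2
  by (simp add: complex_eq_iff power2_eq_square algebra_simps)

lemma hilbert_circle_form_eq_chord_coeffs:
  "(1 + r)\<^sup>2 * ((Re (cnj z0 * (z - z0)))\<^sup>2 - (cmod (z - z0))\<^sup>2 * ((cmod z0)\<^sup>2 - 1))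
     - (r - 1)\<^sup>2 * (Re (cnj z0 * (z - z0)) + ((cmod z0)\<^sup>2 - 1))\<^sup>2
   = hilbert_circle_form z0 r z"
  unfolding hilbert_circle_form_def cmod_power2
  by (simp add: power2_eq_square algebra_simps)

lemma hilbert_disk_eq_ln_iff_circle_form:
  assumes z0: "cmod z0 < 1" and z: "cmod z < 1" and "z \<noteq> z0" and "r > 1"
  shows "hilbert_disk z0 z = ln r \<longleftrightarrow> hilbert_circle_form z0 r z = 0"
proof -
  obtain su sv where "su < 0" "sv > 1" and roots:
    "(cmod (z - z0))\<^sup>2 * su\<^sup>2 + 2 * Re (cnj z0 * (z - z0)) * su + ((cmod z0)\<^sup>2 - 1) = 0"
    "(cmod (z - z0))\<^sup>2 * sv\<^sup>2 + 2 * Re (cnj z0 * (z - z0)) * sv + ((cmod z0)\<^sup>2 - 1) = 0"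
    and h: "hilbert_disk z0 z = ln ((1 - su) * sv / ((- su) * (sv - 1)))"
    using hilbert_disk_eq_ln_cross_ratio[OF z0 z] \<open>z \<noteq> z0\<close> by metis
  have "(1 - su) * sv / ((- su) * (sv - 1)) > 0"
    using \<open>su < 0\<close> \<open>sv > 1\<close> by (intro divide_pos_pos mult_pos_pos) auto
  then have "hilbert_disk z0 z = ln r \<longleftrightarrow> (1 - su) * sv / ((- su) * (sv - 1)) = r"
    unfolding h using \<open>r > 1\<close> by simp
  also have "\<dots> \<longleftrightarrow> (1 + r)\<^sup>2 * ((Re (cnj z0 * (z - z0)))\<^sup>2 - (cmod (z - z0))\<^sup>2 * ((cmod z0)\<^sup>2 - 1))
       = (r - 1)\<^sup>2 * (Re (cnj z0 * (z - z0)) + ((cmod z0)\<^sup>2 - 1))\<^sup>2"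
    using \<open>z \<noteq> z0\<close> by (intro cross_ratio_eq_iff roots \<open>su < 0\<close> \<open>sv > 1\<close> \<open>r > 1\<close>) simp
  also have "\<dots> \<longleftrightarrow> hilbert_circle_form z0 r z = 0"
    unfolding hilbert_circle_form_eq_chord_coeffs[symmetric] by linarith
  finally show ?thesis .
qed

lemma hilbert_circle_form_center_neg:
  assumes "cmod z0 < 1" and "r \<noteq> 1"
  shows "hilbert_circle_form z0 r z0 < 0"
proof -
  have "hilbert_circle_form z0 r z0 = - ((r - 1)\<^sup>2 * (1 - (cmod z0)\<^sup>2)\<^sup>2)"
    unfolding hilbert_circle_form_def cmod_power2 by (simp add: power2_eq_square algebra_simps)
  moreover have "(cmod z0)\<^sup>2 < 1"
    using assms(1) by (simp add: power_less_one_iff)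
  ultimately show ?thesis
    using assms(2) by simp
qed

lemma norm_less_one_if_hilbert_circle_form_eq_0:
  assumes z0: "cmod z0 < 1" and "r > 0" and "hilbert_circle_form z0 r z = 0"
  shows "cmod z < 1"
proof (rule ccontr)
  assume "\<not> cmod z < 1"
  have K: "(1 + r)\<^sup>2 * (1 - (cmod z0)\<^sup>2) > 0"
    using z0 \<open>r > 0\<close> by (simp add: power_less_one_iff)
  have eq: "4 * r * (Re (cnj z0 * z) - 1)\<^sup>2 = (1 + r)\<^sup>2 * (1 - (cmod z0)\<^sup>2) * (1 - (cmod z)\<^sup>2)"
    using assms(3) unfolding hilbert_circle_form_def by simp
  moreover have "1 - (cmod z)\<^sup>2 \<le> 0"
    using \<open>\<not> cmod z < 1\<close> by (simp add: one_le_power)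
  ultimately have "4 * r * (Re (cnj z0 * z) - 1)\<^sup>2 \<le> 0"
    using K by (simp add: mult_nonneg_nonpos)
  then have "Re (cnj z0 * z) = 1"
    using \<open>r > 0\<close> by (simp add: mult_le_0_iff)
  then have "(cmod z)\<^sup>2 = 1"
    using eq K by auto
  then have "cmod z = 1"
    using power2_eq_iff_nonneg[of "cmod z" 1] by simp
  have "Re (cnj z0 * z) \<le> cmod z0"
    using complex_Re_le_cmod[of "cnj z0 * z"] \<open>cmod z = 1\<close> by (simp add: norm_mult)
  then show False
    using \<open>Re (cnj z0 * z) = 1\<close> z0 by simp
qed

lemma dist_sum_eq_iff_quartic:
  fixes z f1 f2 :: "'a::metric_space" and a :: real
  assumes "dist f1 f2 < 2 * a"
  shows "dist z f1 + dist z f2 = 2 * a \<longleftrightarrow>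
    ((dist z f1)\<^sup>2 - (dist z f2)\<^sup>2)\<^sup>2 - 8 * a\<^sup>2 * ((dist z f1)\<^sup>2 + (dist z f2)\<^sup>2) + 16 * (a\<^sup>2)\<^sup>2 = 0"
proof -
  define d1 d2 where "d1 = dist z f1" and "d2 = dist z f2"
  have "d1 \<le> d2 + dist f1 f2" "d2 \<le> d1 + dist f1 f2" "0 \<le> d1" "0 \<le> d2"
    unfolding d1_def d2_def by (metis dist_commute dist_triangle zero_le_dist)+
  then have "(d1 + d2 + 2 * a) * ((d1 - d2 - 2 * a) * (d1 - d2 + 2 * a)) \<noteq> 0"
    using assms zero_le_dist[of f1 f2] by (intro no_zero_divisors) linarith+
  moreover have "(d1\<^sup>2 - d2\<^sup>2)\<^sup>2 - 8 * a\<^sup>2 * (d1\<^sup>2 + d2\<^sup>2) + 16 * (a\<^sup>2)\<^sup>2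
      = (d1 + d2 - 2 * a) * ((d1 + d2 + 2 * a) * ((d1 - d2 - 2 * a) * (d1 - d2 + 2 * a)))"
    by (simp add: power2_eq_square algebra_simps)
  ultimately show ?thesis
    unfolding d1_def[symmetric] d2_def[symmetric] by auto
qed

lemma hilbert_ellipse_quartic_identity:
  fixes p q x y r A B g a :: real
  assumes "A = (1 + r)\<^sup>2 * (1 - (p\<^sup>2 + q\<^sup>2)) + 4 * r * (p\<^sup>2 + q\<^sup>2)" and "A * B = 1"
    and "g\<^sup>2 = 4 * (r - 1)\<^sup>2 * r * (1 - (p\<^sup>2 + q\<^sup>2)) * B\<^sup>2"
    and "a\<^sup>2 = (r - 1)\<^sup>2 * (1 - (p\<^sup>2 + q\<^sup>2)) * B"
    and "d1 = (x - (4 * r * B * p - g * q))\<^sup>2 + (y - (4 * r * B * q + g * p))\<^sup>2"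
    and "d2 = (x - (4 * r * B * p + g * q))\<^sup>2 + (y - (4 * r * B * q - g * p))\<^sup>2"
  shows "(d1 - d2)\<^sup>2 - 8 * a\<^sup>2 * (d1 + d2) + 16 * (a\<^sup>2)\<^sup>2
    = - 16 * a\<^sup>2 * B * (4 * r * (p * x + q * y - 1)\<^sup>2 - (1 + r)\<^sup>2 * (1 - (p\<^sup>2 + q\<^sup>2)) * (1 - (x\<^sup>2 + y\<^sup>2)))"
  using assms by algebra

lemma is_ellipse_hilbert_circle_form_zeros:
  assumes z0: "cmod z0 < 1" and "r > 1"
  shows "is_ellipse {z. hilbert_circle_form z0 r z = 0}"
proof -
  define p q m where "p = Re z0" and "q = Im z0" and "m = p\<^sup>2 + q\<^sup>2"
  have m: "m = (cmod z0)\<^sup>2"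
    unfolding m_def p_def q_def by (simp add: cmod_power2)
  have "0 \<le> m" "m < 1"
    using z0 unfolding m by (simp_all add: power_less_one_iff)
  define A B where "A = (1 + r)\<^sup>2 * (1 - m) + 4 * r * m" and "B = 1 / A"
  have K: "(1 + r)\<^sup>2 * (1 - m) > 0"
    using \<open>m < 1\<close> \<open>r > 1\<close> by simp
  then have "A > 0"
    unfolding A_def using \<open>0 \<le> m\<close> \<open>r > 1\<close> by (simp add: add_pos_nonneg)
  then have AB: "A * B = 1" and "B > 0"
    unfolding B_def by simp_all
  define g a where "g = 2 * (r - 1) * sqrt (r * (1 - m)) * B"
    and "a = (r - 1) * sqrt (1 - m) * sqrt B"
  have "g \<ge> 0" "a > 0"
    unfolding g_def a_def using \<open>r > 1\<close> \<open>m < 1\<close> \<open>B > 0\<close> by simp_all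
  have g2: "g\<^sup>2 = 4 * (r - 1)\<^sup>2 * r * (1 - m) * B\<^sup>2"
    unfolding g_def using \<open>r > 1\<close> \<open>m < 1\<close>
    by (simp add: power_mult_distrib) (simp add: power2_eq_square algebra_simps)
  have a2: "a\<^sup>2 = (r - 1)\<^sup>2 * (1 - m) * B"
    unfolding a_def using \<open>m < 1\<close> \<open>B > 0\<close> by (simp add: power_mult_distrib)
  \<comment> \<open>The centre of the ellipse is \<open>4 r B z0\<close>; its major axis is perpendicular to \<open>z0\<close>.\<close>
  define f1 f2 where "f1 = z0 * Complex (4 * r * B) g" and "f2 = z0 * Complex (4 * r * B) (- g)"
  have "f1 - f2 = \<i> * of_real (2 * g) * z0"
    unfolding f1_def f2_def by (simp add: complex_eq_iff)
  then have "dist f1 f2 = 2 * g * cmod z0"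
    using \<open>g \<ge> 0\<close> by (simp add: dist_norm norm_mult)
  also have "\<dots> < 2 * a"
  proof -
    have "(g * cmod z0)\<^sup>2 = (r - 1)\<^sup>2 * (1 - m) * B\<^sup>2 * (4 * r * m)"
      using g2 m by (simp add: power_mult_distrib)
    also have "\<dots> < (r - 1)\<^sup>2 * (1 - m) * B\<^sup>2 * A"
      unfolding A_def using K \<open>r > 1\<close> \<open>m < 1\<close> \<open>B > 0\<close> by simp
    also have "\<dots> = a\<^sup>2"
      using a2 AB by (simp add: power2_eq_square mult.commute)
    finally have "g * cmod z0 < a"
      by (rule power2_less_imp_less) (use \<open>a > 0\<close> in simp)
    then show ?thesis
      by simp
  qed
  finally have foci: "dist f1 f2 < 2 * a" .
  have "((dist z f1)\<^sup>2 - (dist z f2)\<^sup>2)\<^sup>2 - 8 * a\<^sup>2 * ((dist z f1)\<^sup>2 + (dist z f2)\<^sup>2) + 16 * (a\<^sup>2)\<^sup>2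
      = - 16 * a\<^sup>2 * B * hilbert_circle_form z0 r z" for z
  proof -
    define x y where "x = Re z" and "y = Im z"
    have D: "(dist z f1)\<^sup>2 = (x - (4 * r * B * p - g * q))\<^sup>2 + (y - (4 * r * B * q + g * p))\<^sup>2"
      "(dist z f2)\<^sup>2 = (x - (4 * r * B * p + g * q))\<^sup>2 + (y - (4 * r * B * q - g * p))\<^sup>2"
      unfolding f1_def f2_def x_def y_def p_def q_def by (simp_all add: dist_norm cmod_power2 ac_simps)
    have F: "hilbert_circle_form z0 r z
        = 4 * r * (p * x + q * y - 1)\<^sup>2 - (1 + r)\<^sup>2 * (1 - m) * (1 - (x\<^sup>2 + y\<^sup>2))"
      unfolding hilbert_circle_form_def m_def p_def q_def x_def y_def by (simp add: cmod_power2)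
    show ?thesis
      unfolding F m_def
      by (rule hilbert_ellipse_quartic_identity[OF _ AB _ _ D])
        (use g2 a2 in \<open>simp_all add: A_def m_def\<close>)
  qed
  then have "{z. hilbert_circle_form z0 r z = 0} = {z. dist z f1 + dist z f2 = 2 * a}"
    using dist_sum_eq_iff_quartic[OF foci] \<open>a > 0\<close> \<open>B > 0\<close> by simp
  with foci show ?thesis
    unfolding is_ellipse_def by blast
qed

lemma hilbert_sphere_eq_circle_form_zeros:
  assumes z0: "cmod z0 < 1" and "r > 1"
  shows "{z \<in> ball 0 1. hilbert_disk z0 z = ln r} = {z. hilbert_circle_form z0 r z = 0}"
proof (intro set_eqI iffI)
  fix z
  assume z: "z \<in> {z \<in> ball 0 1. hilbert_disk z0 z = ln r}"
  then have "z \<noteq> z0"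
    using \<open>r > 1\<close> by (auto simp: hilbert_disk_def)
  with z show "z \<in> {z. hilbert_circle_form z0 r z = 0}"
    using hilbert_disk_eq_ln_iff_circle_form[OF z0 _ _ \<open>r > 1\<close>] by auto
next
  fix z
  assume "z \<in> {z. hilbert_circle_form z0 r z = 0}"
  then have form: "hilbert_circle_form z0 r z = 0"
    by simp
  have "cmod z < 1"
    using \<open>r > 1\<close> by (intro norm_less_one_if_hilbert_circle_form_eq_0[OF z0 _ form]) simp
  moreover have "z \<noteq> z0"
    using form hilbert_circle_form_center_neg[OF z0, of r] \<open>r > 1\<close> by force
  ultimately show "z \<in> {z \<in> ball 0 1. hilbert_disk z0 z = ln r}"
    using form hilbert_disk_eq_ln_iff_circle_form[OF z0 _ _ \<open>r > 1\<close>] by auto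
qed

theorem mainTheorem7:
  fixes z0 :: complex and t r :: real
  assumes "z0 \<in> ball 0 1" and "t > 0" and "r = exp t"
  shows "{z \<in> ball 0 1. hilbert_disk z0 z = t} =
           {z. (cnj z0)\<^sup>2 * of_real r * z\<^sup>2
               - of_real ((r\<^sup>2 + 1) * (cmod z0)\<^sup>2 - (r + 1)\<^sup>2) * z * cnj z
               + z0\<^sup>2 * of_real r * (cnj z)\<^sup>2
               - 4 * cnj z0 * of_real r * z - 4 * z0 * of_real r * cnj z
               + of_real ((r + 1)\<^sup>2 * (cmod z0)\<^sup>2 - (r - 1)\<^sup>2) = 0}
      \<and> is_ellipse {z \<in> ball 0 1. hilbert_disk z0 z = t}
      \<and> {z. (cnj z0)\<^sup>2 * of_real r * z\<^sup>2
               - of_real ((r\<^sup>2 + 1) * (cmod z0)\<^sup>2 - (r + 1)\<^sup>2) * z * cnj z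
               + z0\<^sup>2 * of_real r * (cnj z)\<^sup>2
               - 4 * cnj z0 * of_real r * z - 4 * z0 * of_real r * cnj z
               + of_real ((r + 1)\<^sup>2 * (cmod z0)\<^sup>2 - (r - 1)\<^sup>2) = 0} \<subseteq> ball 0 1"
proof -
  have z0: "cmod z0 < 1" and "r > 1" and "t = ln r"
    using assms by simp_all
  have "is_ellipse {z. hilbert_circle_form z0 r z = 0}"
    using z0 \<open>r > 1\<close> by (rule is_ellipse_hilbert_circle_form_zeros)
  moreover have "{z. hilbert_circle_form z0 r z = 0} \<subseteq> ball 0 1"
    using norm_less_one_if_hilbert_circle_form_eq_0[OF z0, of r] \<open>r > 1\<close> by auto
  ultimately show ?thesis
    unfolding quadric_eq_of_real_hilbert_circle_form of_real_eq_0_iff \<open>t = ln r\<close>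
      hilbert_sphere_eq_circle_form_zeros[OF z0 \<open>r > 1\<close>]
    by blast
qed

end
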